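(* For a nonnegative matrix $M\in\mathbb{R}_+^{p\times q}$ the following statements are pairwise equivalent: (i) $M$ is a slack matrix of a polyhedral cone; (ii) $M$ satisfies the RCGC, i.e., $\{x^TM : x\in\mathbb{R}_+^p\}=\{x^TM: x\in\mathbb{R}^p\}\cap\mathbb{R}_+^q$; (iii) $M$ satisfies the CCGC, i.e., $\{Mz: z\in\mathbb{R}_+^q\}=\{Mz: z\in\mathbb{R}^q\}\cap\mathbb{R}_+^p$.
   Context: A matrix $S\in\mathbb{R}^{p\times q}$ is a slack matrix of a polyhedral cone $K\subseteq\mathbb{R}^n$ if there are matrices $A\in\mathbb{R}^{p\times n}$ and $B\in\mathbb{R}^{n\times q}$ with $K=\{x\in\mathbb{R}^n: x^TB\ge 0\}=\{y^TA: y\in\mathbb{R}_+^p\}$ and $S=AB$. A matrix is a slack matrix of a polyhedral cone if it is a slack matrix of some polyhedral cone. *)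

theory Defs
  imports "Jordan_Normal_Form.Matrix"
begin

text \<open>Matrices and vectors of varying dimension are represented with the
  Jordan_Normal_Form types. A row vector x^T M is represented as the column vector
  (transpose M) *v x.\<close>

definition nonneg_vec :: "real vec \<Rightarrow> bool" where
  "nonneg_vec v \<longleftrightarrow> (\<forall>i < dim_vec v. v $ i \<ge> 0)"

definition nonneg_mat :: "real mat \<Rightarrow> bool" where
  "nonneg_mat M \<longleftrightarrow> (\<forall>i < dim_row M. \<forall>j < dim_col M. M $$ (i, j) \<ge> 0)"

definition is_slack_matrix_of_cone :: "real mat \<Rightarrow> real vec set \<Rightarrow> bool" where
  "is_slack_matrix_of_cone S K \<longleftrightarrow>
     (\<exists>n A B. A \<in> carrier_mat (dim_row S) n \<and> B \<in> carrier_mat n (dim_col S) \<and>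
        K = {x \<in> carrier_vec n. nonneg_vec (transpose_mat B *\<^sub>v x)} \<and>
        K = {transpose_mat A *\<^sub>v y | y. y \<in> carrier_vec (dim_row S) \<and> nonneg_vec y} \<and>
        S = A * B)"

definition is_slack_matrix_of_polyhedral_cone :: "real mat \<Rightarrow> bool" where
  "is_slack_matrix_of_polyhedral_cone S \<longleftrightarrow> (\<exists>K. is_slack_matrix_of_cone S K)"

definition RCGC :: "real mat \<Rightarrow> bool" where
  "RCGC M \<longleftrightarrow>
     {transpose_mat M *\<^sub>v x | x. x \<in> carrier_vec (dim_row M) \<and> nonneg_vec x} =
     {transpose_mat M *\<^sub>v x | x. x \<in> carrier_vec (dim_row M)} \<inter>
     {v \<in> carrier_vec (dim_col M). nonneg_vec v}"

definition CCGC :: "real mat \<Rightarrow> bool" where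
  "CCGC M \<longleftrightarrow>
     {M *\<^sub>v z | z. z \<in> carrier_vec (dim_col M) \<and> nonneg_vec z} =
     {M *\<^sub>v z | z. z \<in> carrier_vec (dim_col M)} \<inter>
     {v \<in> carrier_vec (dim_row M). nonneg_vec v}"

end

theory Submission
  imports Defs
begin

(*
  A slack matrix S = A B pairs the generators of K (rows of A) with its defining inequalities
  (columns of B). If x^T S = (x^T A) B is nonnegative, then x^T A lies in K, hence equals y^T A
  with y >= 0, and x^T S = y^T S: this is the RCGC. Conversely, factor M = A B with B = C M of full
  row rank and put K = {x. x^T B >= 0}. For x in K the nonnegative row x^T B = (x^T C) M equals
  y^T M = (y^T A) B with y >= 0 by the RCGC, and since u |-> u^T B is injective, x = y^T A.

  Transposition exchanges RCGC and CCGC, so it remains to derive the CCGC from the RCGC for M >= 0.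
  If M z >= 0 were not in the column cone, Farkas' lemma would give y with y^T M >= 0 and
  y^T M z < 0; the RCGC writes y^T M = x^T M with x >= 0, but then y^T M z = x^T (M z) >= 0.
*)

(* The combinatorial core works with vectors as functions on nat, of which only the first p
   (or q, n) entries matter. *)
definition dot :: "nat \<Rightarrow> (nat \<Rightarrow> 'a::comm_semiring_0) \<Rightarrow> (nat \<Rightarrow> 'a) \<Rightarrow> 'a" where
  "dot p y x = (\<Sum>k<p. y k * x k)"

(*
  Fourier-Motzkin step of the Farkas induction: if y separates w from v_0, ..., v_(q-1) but
  y . v_q < 0, all vectors are projected along v_q into the hyperplane orthogonal to y.
*)
definition eliminate ::
    "nat \<Rightarrow> (nat \<Rightarrow> 'a::comm_ring) \<Rightarrow> (nat \<Rightarrow> 'a) \<Rightarrow> (nat \<Rightarrow> 'a) \<Rightarrow> nat \<Rightarrow> 'a"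
  where "eliminate p y u x = (\<lambda>k. dot p y x * u k - dot p y u * x k)"

lemma dot_diff_scale_left:
  fixes z y x :: "nat \<Rightarrow> 'a::comm_ring"
  shows "dot p (\<lambda>k. z k - c * y k) x = dot p z x - c * dot p y x"
  unfolding dot_def by (simp add: left_diff_distrib sum_subtractf sum_distrib_left mult.assoc)

lemma dot_diff_scale_right:
  fixes z u x :: "nat \<Rightarrow> 'a::comm_ring"
  shows "dot p z (\<lambda>k. a * u k - b * x k) = a * dot p z u - b * dot p z x"
  unfolding dot_def by (simp add: right_diff_distrib sum_subtractf sum_distrib_left ac_simps)

lemma dot_eliminate:
  "dot p z (eliminate p y u x) = dot p y x * dot p z u - dot p y u * dot p z x"
  unfolding eliminate_def dot_diff_scale_right ..

lemma cone_combination_eliminate: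
  fixes v :: "nat \<Rightarrow> nat \<Rightarrow> 'a::linordered_field"
  assumes y: "\<forall>i<q. 0 \<le> dot p y (v i)" "dot p y w < 0" "dot p y (v q) < 0"
    and l: "\<forall>i<q. 0 \<le> l i"
    and comb: "\<forall>k<p. eliminate p y (v q) w k = (\<Sum>i<q. l i * eliminate p y (v q) (v i) k)"
  shows "\<exists>l'. (\<forall>i<Suc q. 0 \<le> l' i) \<and> (\<forall>k<p. w k = (\<Sum>i<Suc q. l' i * v i k))"
proof -
  define a where "a = dot p y (v q)"
  define c where "c = (dot p y w - (\<Sum>i<q. l i * dot p y (v i))) / a"
  have combination_nonneg: "0 \<le> (\<Sum>i<q. l i * dot p y (v i))"
    using l y(1) by (intro sum_nonneg) auto
  have ac: "a * c = dot p y w - (\<Sum>i<q. l i * dot p y (v i))"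
    using y(3) unfolding c_def a_def by simp
  have "0 \<le> c"
    unfolding c_def a_def using combination_nonneg y(2,3) by (intro divide_nonpos_neg) linarith+
  then have "\<forall>i<Suc q. 0 \<le> (l(q := c)) i"
    using l by (auto simp: less_Suc_eq)
  moreover have "w k = (\<Sum>i<Suc q. (l(q := c)) i * v i k)" if "k < p" for k
  proof -
    have "dot p y w * v q k - a * w k = (\<Sum>i<q. l i * (dot p y (v i) * v q k - a * v i k))"
      using comb that unfolding eliminate_def a_def by simp
    also have "\<dots> = (\<Sum>i<q. l i * dot p y (v i)) * v q k - a * (\<Sum>i<q. l i * v i k)"
      by (simp add: right_diff_distrib sum_subtractf sum_distrib_left sum_distrib_right mult_ac)
    finally have "a * w k =
        (dot p y w - (\<Sum>i<q. l i * dot p y (v i))) * v q k + a * (\<Sum>i<q. l i * v i k)"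
      by (simp add: algebra_simps)
    also have "\<dots> = a * ((\<Sum>i<q. l i * v i k) + c * v q k)"
      unfolding ac[symmetric] by (simp add: algebra_simps)
    finally have "w k = (\<Sum>i<q. l i * v i k) + c * v q k"
      using y(3) unfolding a_def by simp
    then show ?thesis
      by simp
  qed
  ultimately show ?thesis by blast
qed

lemma separator_eliminate:
  fixes v :: "nat \<Rightarrow> nat \<Rightarrow> 'a::linordered_field"
  assumes a: "dot p y (v q) < 0"
    and y': "\<forall>i<q. 0 \<le> dot p y' (eliminate p y (v q) (v i))"
      "dot p y' (eliminate p y (v q) w) < 0"
  shows "\<exists>y''. (\<forall>i<Suc q. 0 \<le> dot p y'' (v i)) \<and> dot p y'' w < 0"
proof -
  define y'' where "y'' = (\<lambda>k. y' k - (dot p y' (v q) / dot p y (v q)) * y k)"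
  have y'': "dot p y'' x = - dot p y' (eliminate p y (v q) x) / dot p y (v q)" for x
  proof -
    have "dot p y'' x = dot p y' x - dot p y' (v q) / dot p y (v q) * dot p y x"
      unfolding y''_def by (rule dot_diff_scale_left)
    also have "\<dots> = - dot p y' (eliminate p y (v q) x) / dot p y (v q)"
      unfolding dot_eliminate using a by (simp add: field_simps)
    finally show ?thesis .
  qed
  have "dot p y' (eliminate p y (v q) (v q)) = 0"
    unfolding dot_eliminate by simp
  then have "\<forall>i<Suc q. 0 \<le> dot p y'' (v i)"
    using y'(1) a unfolding y'' by (auto simp: less_Suc_eq intro: divide_nonneg_neg)
  moreover have "dot p y'' w < 0"
    using y'(2) a unfolding y'' by (simp add: divide_neg_neg)
  ultimately show ?thesis by blast
qed

lemma farkas_fun: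
  fixes v :: "nat \<Rightarrow> nat \<Rightarrow> 'a::linordered_field" and w :: "nat \<Rightarrow> 'a"
  shows "(\<exists>l. (\<forall>i<q. 0 \<le> l i) \<and> (\<forall>k<p. w k = (\<Sum>i<q. l i * v i k))) \<or>
    (\<exists>y. (\<forall>i<q. 0 \<le> dot p y (v i)) \<and> dot p y w < 0)"
proof (induction q arbitrary: v w)
  case 0
  show ?case
  proof (cases "\<forall>k<p. w k = 0")
    case False
    then obtain k where "k < p" "w k \<noteq> 0" by blast
    then have "0 < dot p w w"
      unfolding dot_def by (intro sum_pos2[of _ k]) (auto simp: zero_less_mult_iff linorder_neq_iff)
    then have "dot p (\<lambda>k. - w k) w < 0"
      by (simp add: dot_def sum_negf)
    then show ?thesis by blast
  qed auto
next
  case (Suc q)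
  from Suc.IH consider
      (cone) l where "\<forall>i<q. 0 \<le> l i" "\<forall>k<p. w k = (\<Sum>i<q. l i * v i k)"
    | (separated) y where "\<forall>i<q. 0 \<le> dot p y (v i)" "dot p y w < 0"
    by blast
  then show ?case
  proof cases
    case cone
    then have "\<forall>i<Suc q. 0 \<le> (l(q := 0)) i" "\<forall>k<p. w k = (\<Sum>i<Suc q. (l(q := 0)) i * v i k)"
      by (auto simp: less_Suc_eq intro!: sum.cong)
    then show ?thesis by blast
  next
    case separated
    show ?thesis
    proof (cases "0 \<le> dot p y (v q)")
      case True
      with separated show ?thesis by (auto simp: less_Suc_eq)
    next
      case False
      then have neg: "dot p y (v q) < 0" by simp
      from Suc.IH[where v = "\<lambda>i. eliminate p y (v q) (v i)" and w = "eliminate p y (v q) w"]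
      consider
          (cone') l where "\<forall>i<q. 0 \<le> l i"
            "\<forall>k<p. eliminate p y (v q) w k = (\<Sum>i<q. l i * eliminate p y (v q) (v i) k)"
        | (separated') y' where "\<forall>i<q. 0 \<le> dot p y' (eliminate p y (v q) (v i))"
            "dot p y' (eliminate p y (v q) w) < 0"
        by blast
      then show ?thesis
      proof cases
        case cone'
        with cone_combination_eliminate[where v = v and q = q, OF separated neg]
        show ?thesis by blast
      next
        case separated'
        with separator_eliminate[where v = v and q = q, OF neg] show ?thesis by blast
      qed
    qed
  qed
qed

definition indep_rows :: "nat \<Rightarrow> nat \<Rightarrow> (nat \<Rightarrow> nat \<Rightarrow> 'a::field) \<Rightarrow> bool" where
  "indep_rows n q b \<longleftrightarrow> (\<forall>x. (\<forall>j<q. (\<Sum>l<n. x l * b l j) = 0) \<longrightarrow> (\<forall>l<n. x l = 0))"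

lemma indep_rows_extend:
  assumes indep: "indep_rows n q b" and new: "\<nexists>x. \<forall>j<q. r j = (\<Sum>l<n. x l * b l j)"
  shows "indep_rows (Suc n) q (b(n := r))"
  unfolding indep_rows_def
proof (rule allI, rule impI)
  fix x assume "\<forall>j<q. (\<Sum>l<Suc n. x l * (b(n := r)) l j) = 0"
  then have zero: "(\<Sum>l<n. x l * b l j) + x n * r j = 0" if "j < q" for j
    using that by (simp cong: sum.cong_simp)
  have "x n = 0"
  proof (rule ccontr)
    assume "x n \<noteq> 0"
    have "r j = (\<Sum>l<n. (- x l / x n) * b l j)" if "j < q" for j
    proof -
      have "(\<Sum>l<n. x l * b l j) = - (x n * r j)"
        using zero[OF that] by (simp add: eq_neg_iff_add_eq_0)
      then have "(\<Sum>l<n. (- x l / x n) * b l j) = x n * r j / x n"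
        by (simp add: sum_divide_distrib[symmetric] sum_negf)
      with \<open>x n \<noteq> 0\<close> show ?thesis by simp
    qed
    then have "\<exists>y. \<forall>j<q. r j = (\<Sum>l<n. y l * b l j)"
      by (intro exI[of _ "\<lambda>l. - x l / x n"]) simp
    with new show False ..
  qed
  moreover have "\<forall>j<q. (\<Sum>l<n. x l * b l j) = 0"
    using zero \<open>x n = 0\<close> by simp
  with indep have "\<forall>l<n. x l = 0"
    unfolding indep_rows_def by blast
  ultimately show "\<forall>l<Suc n. x l = 0"
    by (simp add: less_Suc_eq)
qed

lemma rank_factorization_fun:
  fixes m :: "nat \<Rightarrow> nat \<Rightarrow> 'a::field"
  assumes "k \<le> p"
  shows "\<exists>n a b c. (\<forall>i<k. \<forall>j<q. m i j = (\<Sum>l<n. a i l * b l j)) \<and>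
    (\<forall>l<n. \<forall>j<q. b l j = (\<Sum>i<p. c l i * m i j)) \<and> indep_rows n q b"
  using assms
proof (induction k)
  case 0
  have "indep_rows 0 q b" for b :: "nat \<Rightarrow> nat \<Rightarrow> 'a"
    by (simp add: indep_rows_def)
  then show ?case by blast
next
  case (Suc k)
  from Suc.IH[OF Suc_leD[OF Suc.prems]] obtain n a b c where
    fac: "\<forall>i<k. \<forall>j<q. m i j = (\<Sum>l<n. a i l * b l j)" and
    rows: "\<forall>l<n. \<forall>j<q. b l j = (\<Sum>i<p. c l i * m i j)" and
    indep: "indep_rows n q b"
    by blast
  show ?case
  proof (cases "\<exists>x. \<forall>j<q. m k j = (\<Sum>l<n. x l * b l j)")
    case True
    then obtain x where "\<forall>j<q. m k j = (\<Sum>l<n. x l * b l j)" by blast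
    with fac have "\<forall>i<Suc k. \<forall>j<q. m i j = (\<Sum>l<n. (a(k := x)) i l * b l j)"
      by (auto simp: less_Suc_eq)
    with rows indep show ?thesis by blast
  next
    case False
    define a' where "a' = (\<lambda>i. if i = k then (\<lambda>l. if l = n then 1 else 0) else (a i)(n := 0))"
    define b' where "b' = b(n := m k)"
    define c' where "c' = c(n := (\<lambda>i. if i = k then 1 else 0))"
    have "\<forall>i<Suc k. \<forall>j<q. m i j = (\<Sum>l<Suc n. a' i l * b' l j)"
      using fac by (auto simp: less_Suc_eq a'_def b'_def cong: sum.cong_simp)
    moreover have "\<forall>l<Suc n. \<forall>j<q. b' l j = (\<Sum>i<p. c' l i * m i j)"
    proof (intro allI impI)
      fix l j assume "l < Suc n" "j < q"
      have "(\<Sum>i<p. (if i = k then 1 else 0) * m i j) = (\<Sum>i<p. if i = k then m k j else 0)"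
        by (rule sum.cong) auto
      with Suc.prems have "(\<Sum>i<p. (if i = k then 1 else 0) * m i j) = m k j"
        by simp
      with rows \<open>l < Suc n\<close> \<open>j < q\<close> show "b' l j = (\<Sum>i<p. c' l i * m i j)"
        by (auto simp: less_Suc_eq b'_def c'_def)
    qed
    moreover have "indep_rows (Suc n) q b'"
      unfolding b'_def using indep False by (rule indep_rows_extend)
    ultimately show ?thesis by blast
  qed
qed

lemma mult_mat_vec_nth:
  "M \<in> carrier_mat p q \<Longrightarrow> z \<in> carrier_vec q \<Longrightarrow> k < p \<Longrightarrow>
    (M *\<^sub>v z) $ k = (\<Sum>j<q. M $$ (k, j) * z $ j)"
  by (auto simp: scalar_prod_def lessThan_atLeast0 intro!: sum.cong)

lemma transpose_mult_mat_vec_nth: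
  "M \<in> carrier_mat p q \<Longrightarrow> y \<in> carrier_vec p \<Longrightarrow> j < q \<Longrightarrow>
    (transpose_mat M *\<^sub>v y) $ j = (\<Sum>k<p. M $$ (k, j) * y $ k)"
  by (auto simp: scalar_prod_def lessThan_atLeast0 intro!: sum.cong)

lemma mult_mat_nth:
  "A \<in> carrier_mat p n \<Longrightarrow> B \<in> carrier_mat n q \<Longrightarrow> i < p \<Longrightarrow> j < q \<Longrightarrow>
    (A * B) $$ (i, j) = (\<Sum>l<n. A $$ (i, l) * B $$ (l, j))"
  by (auto simp: scalar_prod_def lessThan_atLeast0 intro!: sum.cong)

lemma farkas_mat:
  fixes M :: "real mat"
  assumes M: "M \<in> carrier_mat p q" and w: "w \<in> carrier_vec p"
  shows "(\<exists>z\<in>carrier_vec q. nonneg_vec z \<and> M *\<^sub>v z = w) \<or>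
    (\<exists>y\<in>carrier_vec p. nonneg_vec (transpose_mat M *\<^sub>v y) \<and> y \<bullet> w < 0)"
proof -
  from farkas_fun[where v = "\<lambda>i k. M $$ (k, i)" and w = "\<lambda>k. w $ k" and p = p and q = q]
  consider
      (cone) l where "\<forall>i<q. 0 \<le> l i" "\<forall>k<p. w $ k = (\<Sum>i<q. l i * M $$ (k, i))"
    | (separated) y where "\<forall>i<q. 0 \<le> dot p y (\<lambda>k. M $$ (k, i))" "dot p y (\<lambda>k. w $ k) < 0"
    by blast
  then show ?thesis
  proof cases
    case cone
    have "M *\<^sub>v vec q l = w"
      using cone(2) M w by (intro eq_vecI)
        (auto simp: mult_mat_vec_nth mult.commute simp del: index_mult_mat_vec)
    moreover have "nonneg_vec (vec q l)"
      using cone(1) by (simp add: nonneg_vec_def)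
    ultimately show ?thesis
      by (intro disjI1 bexI[of _ "vec q l"]) auto
  next
    case separated
    have "nonneg_vec (transpose_mat M *\<^sub>v vec p y)"
      using separated(1) M
      by (auto simp: nonneg_vec_def transpose_mult_mat_vec_nth dot_def mult.commute
          simp del: index_mult_mat_vec)
    moreover have "vec p y \<bullet> w < 0"
      using separated(2) w by (simp add: scalar_prod_def dot_def lessThan_atLeast0)
    ultimately show ?thesis
      by (intro disjI2 bexI[of _ "vec p y"]) auto
  qed
qed

lemma inj_on_transpose_mult_vec:
  assumes B: "B \<in> carrier_mat n q" and indep: "indep_rows n q (\<lambda>l j. B $$ (l, j))"
  shows "inj_on (\<lambda>u. transpose_mat B *\<^sub>v u) (carrier_vec n)"
proof (rule inj_onI)
  fix u u' assume u: "u \<in> carrier_vec n" and u': "u' \<in> carrier_vec n"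
    and eq: "transpose_mat B *\<^sub>v u = transpose_mat B *\<^sub>v u'"
  have "(\<Sum>l<n. (u $ l - u' $ l) * B $$ (l, j)) = 0" if "j < q" for j
  proof -
    have "(\<Sum>l<n. (u $ l - u' $ l) * B $$ (l, j)) =
        (transpose_mat B *\<^sub>v u) $ j - (transpose_mat B *\<^sub>v u') $ j"
      using B u u' that
      by (simp add: transpose_mult_mat_vec_nth algebra_simps sum_subtractf
        del: index_mult_mat_vec)
    with eq show ?thesis by simp
  qed
  then have "\<forall>l<n. u $ l - u' $ l = 0"
    using indep[unfolded indep_rows_def, rule_format, of "\<lambda>l. u $ l - u' $ l"] by blast
  with u u' show "u = u'"
    by (intro eq_vecI) auto
qed

lemma rank_factorization:
  fixes M :: "'a::field mat"
  assumes M: "M \<in> carrier_mat p q"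
  obtains n A B C where "A \<in> carrier_mat p n" "B \<in> carrier_mat n q" "C \<in> carrier_mat n p"
    and "M = A * B" and "B = C * M" and "inj_on (\<lambda>u. transpose_mat B *\<^sub>v u) (carrier_vec n)"
proof -
  obtain n a b c where
    fac: "\<forall>i<p. \<forall>j<q. M $$ (i, j) = (\<Sum>l<n. a i l * b l j)" and
    rows: "\<forall>l<n. \<forall>j<q. b l j = (\<Sum>i<p. c l i * M $$ (i, j))" and
    indep: "indep_rows n q b"
    using rank_factorization_fun[where k = p and p = p and m = "\<lambda>i j. M $$ (i, j)" and q = q] by blast
  define A where "A = mat p n (\<lambda>(i, l). a i l)"
  define B where "B = mat n q (\<lambda>(l, j). b l j)"
  define C where "C = mat n p (\<lambda>(l, i). c l i)"
  have A: "A \<in> carrier_mat p n" and B: "B \<in> carrier_mat n q" and C: "C \<in> carrier_mat n p"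
    unfolding A_def B_def C_def by auto
  have AB: "M = A * B"
  proof (rule eq_matI)
    fix i j assume "i < dim_row (A * B)" "j < dim_col (A * B)"
    with A B have "i < p" "j < q" by auto
    with fac show "M $$ (i, j) = (A * B) $$ (i, j)"
      unfolding mult_mat_nth[OF A B \<open>i < p\<close> \<open>j < q\<close>] by (simp add: A_def B_def)
  qed (use M A B in auto)
  have BC: "B = C * M"
  proof (rule eq_matI)
    fix l j assume "l < dim_row (C * M)" "j < dim_col (C * M)"
    with C M have "l < n" "j < q" by auto
    with rows show "B $$ (l, j) = (C * M) $$ (l, j)"
      unfolding mult_mat_nth[OF C M \<open>l < n\<close> \<open>j < q\<close>] by (simp add: B_def C_def)
  qed (use M B C in auto)
  have "indep_rows n q (\<lambda>l j. B $$ (l, j))"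
    using indep unfolding indep_rows_def B_def by (simp cong: sum.cong_simp)
  with B have "inj_on (\<lambda>u. transpose_mat B *\<^sub>v u) (carrier_vec n)"
    by (rule inj_on_transpose_mult_vec)
  with A B C AB BC show ?thesis
    by (rule that)
qed

lemma nonneg_mat_mult_vec:
  assumes "nonneg_mat M" and "z \<in> carrier_vec (dim_col M)" and "nonneg_vec z"
  shows "nonneg_vec (M *\<^sub>v z)"
  using assms unfolding nonneg_mat_def nonneg_vec_def
  by (auto simp: scalar_prod_def intro!: sum_nonneg)

lemma nonneg_mat_transpose: "nonneg_mat M \<Longrightarrow> nonneg_mat (transpose_mat M)"
  unfolding nonneg_mat_def by simp

lemma RCGC_eq_CCGC_transpose: "RCGC M = CCGC (transpose_mat M)"
  unfolding RCGC_def CCGC_def by simp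

lemma CCGC_nonneg:
  assumes "CCGC M" and "z \<in> carrier_vec (dim_col M)" and "nonneg_vec z"
  shows "nonneg_vec (M *\<^sub>v z)"
  using assms unfolding CCGC_def by blast

lemma CCGC_D:
  assumes "CCGC M" and "z \<in> carrier_vec (dim_col M)" and "nonneg_vec (M *\<^sub>v z)"
  obtains z' where "z' \<in> carrier_vec (dim_col M)" and "nonneg_vec z'" and "M *\<^sub>v z' = M *\<^sub>v z"
proof -
  have "M *\<^sub>v z \<in> {M *\<^sub>v z | z. z \<in> carrier_vec (dim_col M)} \<inter>
      {v \<in> carrier_vec (dim_row M). nonneg_vec v}"
    using assms(2,3) carrier_vecI[of "M *\<^sub>v z" "dim_row M"] by auto
  with assms(1) have "M *\<^sub>v z \<in> {M *\<^sub>v z | z. z \<in> carrier_vec (dim_col M) \<and> nonneg_vec z}"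
    unfolding CCGC_def by simp
  then obtain z' where "z' \<in> carrier_vec (dim_col M)" "nonneg_vec z'" "M *\<^sub>v z = M *\<^sub>v z'"
    by blast
  then show ?thesis
    by (intro that) simp_all
qed

lemma CCGC_I:
  assumes nonneg: "\<And>z. z \<in> carrier_vec (dim_col M) \<Longrightarrow> nonneg_vec z \<Longrightarrow> nonneg_vec (M *\<^sub>v z)"
    and cone: "\<And>z. z \<in> carrier_vec (dim_col M) \<Longrightarrow> nonneg_vec (M *\<^sub>v z) \<Longrightarrow>
      \<exists>z'\<in>carrier_vec (dim_col M). nonneg_vec z' \<and> M *\<^sub>v z' = M *\<^sub>v z"
  shows "CCGC M"
  unfolding CCGC_def
proof (intro equalityI subsetI)
  fix v assume "v \<in> {M *\<^sub>v z | z. z \<in> carrier_vec (dim_col M) \<and> nonneg_vec z}"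
  with nonneg show "v \<in> {M *\<^sub>v z | z. z \<in> carrier_vec (dim_col M)} \<inter>
      {v \<in> carrier_vec (dim_row M). nonneg_vec v}"
    using carrier_vecI[of "M *\<^sub>v _" "dim_row M"] by auto
next
  fix v assume "v \<in> {M *\<^sub>v z | z. z \<in> carrier_vec (dim_col M)} \<inter>
      {v \<in> carrier_vec (dim_row M). nonneg_vec v}"
  then obtain z where z: "z \<in> carrier_vec (dim_col M)" "nonneg_vec (M *\<^sub>v z)" and v: "v = M *\<^sub>v z"
    by blast
  from cone[OF z] obtain z' where "z' \<in> carrier_vec (dim_col M)" "nonneg_vec z'" "M *\<^sub>v z' = v"
    unfolding v by blast
  then show "v \<in> {M *\<^sub>v z | z. z \<in> carrier_vec (dim_col M) \<and> nonneg_vec z}"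
    by blast
qed

lemma slack_matrix_imp_RCGC:
  assumes "is_slack_matrix_of_polyhedral_cone S"
  shows "RCGC S"
proof -
  from assms obtain K where "is_slack_matrix_of_cone S K"
    unfolding is_slack_matrix_of_polyhedral_cone_def ..
  then obtain n A B where A: "A \<in> carrier_mat (dim_row S) n" and B: "B \<in> carrier_mat n (dim_col S)"
    and K_ineq: "K = {x \<in> carrier_vec n. nonneg_vec (transpose_mat B *\<^sub>v x)}"
    and K_gen: "K = {transpose_mat A *\<^sub>v y | y. y \<in> carrier_vec (dim_row S) \<and> nonneg_vec y}"
    and AB: "S = A * B"
    unfolding is_slack_matrix_of_cone_def by (elim exE conjE) (rule that; assumption)
  have "transpose_mat S = transpose_mat B * transpose_mat A"
    unfolding AB by (rule transpose_mult[OF A B])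
  then have ST: "transpose_mat S *\<^sub>v y = transpose_mat B *\<^sub>v (transpose_mat A *\<^sub>v y)"
    if "y \<in> carrier_vec (dim_row S)" for y
    using A B that by simp
  have "CCGC (transpose_mat S)"
  proof (rule CCGC_I)
    fix y assume y: "y \<in> carrier_vec (dim_col (transpose_mat S))" "nonneg_vec y"
    then have "transpose_mat A *\<^sub>v y \<in> K"
      unfolding K_gen by auto
    with y show "nonneg_vec (transpose_mat S *\<^sub>v y)"
      unfolding K_ineq by (simp add: ST)
  next
    fix y assume y: "y \<in> carrier_vec (dim_col (transpose_mat S))"
      and "nonneg_vec (transpose_mat S *\<^sub>v y)"
    with A have "transpose_mat A *\<^sub>v y \<in> K"
      unfolding K_ineq by (simp add: ST)
    then obtain y' where "y' \<in> carrier_vec (dim_row S)" "nonneg_vec y'"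
      "transpose_mat A *\<^sub>v y = transpose_mat A *\<^sub>v y'"
      unfolding K_gen by auto
    with y show "\<exists>y'\<in>carrier_vec (dim_col (transpose_mat S)).
        nonneg_vec y' \<and> transpose_mat S *\<^sub>v y' = transpose_mat S *\<^sub>v y"
      by (auto simp: ST)
  qed
  then show ?thesis
    by (simp add: RCGC_eq_CCGC_transpose)
qed

lemma RCGC_imp_slack_matrix:
  assumes M: "M \<in> carrier_mat p q" and "RCGC M"
  shows "is_slack_matrix_of_polyhedral_cone M"
proof -
  have CCGC: "CCGC (transpose_mat M)"
    using \<open>RCGC M\<close> by (simp add: RCGC_eq_CCGC_transpose)
  obtain n A B C where A: "A \<in> carrier_mat p n" and B: "B \<in> carrier_mat n q"
    and C: "C \<in> carrier_mat n p" and AB: "M = A * B" and CM: "B = C * M"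
    and inj: "inj_on (\<lambda>u. transpose_mat B *\<^sub>v u) (carrier_vec n)"
    using rank_factorization[OF M] .
  have "transpose_mat M = transpose_mat B * transpose_mat A"
    unfolding AB by (rule transpose_mult[OF A B])
  then have MT: "transpose_mat M *\<^sub>v y = transpose_mat B *\<^sub>v (transpose_mat A *\<^sub>v y)"
    if "y \<in> carrier_vec p" for y
    using A B that by simp
  have "transpose_mat B = transpose_mat M * transpose_mat C"
    unfolding CM by (rule transpose_mult[OF C M])
  then have BT: "transpose_mat B *\<^sub>v x = transpose_mat M *\<^sub>v (transpose_mat C *\<^sub>v x)"
    if "x \<in> carrier_vec n" for x
    using M C that by simp
  define K where "K = {x \<in> carrier_vec n. nonneg_vec (transpose_mat B *\<^sub>v x)}"
  have K_gen: "K = {transpose_mat A *\<^sub>v y | y. y \<in> carrier_vec p \<and> nonneg_vec y}"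
  proof (intro equalityI subsetI)
    fix x assume "x \<in> K"
    then have x: "x \<in> carrier_vec n" and "nonneg_vec (transpose_mat B *\<^sub>v x)"
      unfolding K_def by simp_all
    have Cx: "transpose_mat C *\<^sub>v x \<in> carrier_vec (dim_col (transpose_mat M))"
      using C M x by simp
    have "nonneg_vec (transpose_mat M *\<^sub>v (transpose_mat C *\<^sub>v x))"
      using \<open>nonneg_vec (transpose_mat B *\<^sub>v x)\<close> x by (simp add: BT)
    then obtain y where y: "y \<in> carrier_vec (dim_col (transpose_mat M))" "nonneg_vec y"
      and "transpose_mat M *\<^sub>v y = transpose_mat M *\<^sub>v (transpose_mat C *\<^sub>v x)"
      by (rule CCGC_D[OF CCGC Cx])
    with M x have y': "y \<in> carrier_vec p"
      and "transpose_mat B *\<^sub>v (transpose_mat A *\<^sub>v y) = transpose_mat B *\<^sub>v x"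
      by (simp_all add: MT BT)
    then have "transpose_mat A *\<^sub>v y = x"
      using inj_onD[OF inj] A x by simp
    with y y' show "x \<in> {transpose_mat A *\<^sub>v y | y. y \<in> carrier_vec p \<and> nonneg_vec y}"
      by auto
  next
    fix x assume "x \<in> {transpose_mat A *\<^sub>v y | y. y \<in> carrier_vec p \<and> nonneg_vec y}"
    then obtain y where y: "y \<in> carrier_vec p" "nonneg_vec y" and x: "x = transpose_mat A *\<^sub>v y"
      by blast
    have "nonneg_vec (transpose_mat M *\<^sub>v y)"
      using CCGC_nonneg[OF CCGC] y M by simp
    with A y show "x \<in> K"
      unfolding K_def x by (simp add: MT)
  qed
  have "is_slack_matrix_of_cone M K"
    unfolding is_slack_matrix_of_cone_def using A B AB M K_gen
    by (intro exI[of _ n] exI[of _ A] exI[of _ B] conjI) (simp_all add: K_def)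
  then show ?thesis
    unfolding is_slack_matrix_of_polyhedral_cone_def by blast
qed

lemma CCGC_transpose_imp_CCGC:
  assumes nonneg: "nonneg_mat M" and CCGC: "CCGC (transpose_mat M)"
  shows "CCGC M"
proof (rule CCGC_I)
  fix z assume "z \<in> carrier_vec (dim_col M)" "nonneg_vec z"
  with nonneg show "nonneg_vec (M *\<^sub>v z)"
    by (rule nonneg_mat_mult_vec)
next
  fix z assume z: "z \<in> carrier_vec (dim_col M)" and Mz: "nonneg_vec (M *\<^sub>v z)"
  have M: "M \<in> carrier_mat (dim_row M) (dim_col M)"
    by simp
  have Mz_dim: "M *\<^sub>v z \<in> carrier_vec (dim_row M)"
    by (rule carrier_vecI) simp
  show "\<exists>z'\<in>carrier_vec (dim_col M). nonneg_vec z' \<and> M *\<^sub>v z' = M *\<^sub>v z"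
  proof (rule ccontr)
    assume "\<not> ?thesis"
    with farkas_mat[OF M Mz_dim] obtain y where y: "y \<in> carrier_vec (dim_row M)"
      "nonneg_vec (transpose_mat M *\<^sub>v y)" "y \<bullet> (M *\<^sub>v z) < 0"
      by blast
    from y(1) have "y \<in> carrier_vec (dim_col (transpose_mat M))"
      by simp
    then obtain x where "x \<in> carrier_vec (dim_col (transpose_mat M))" "nonneg_vec x"
      "transpose_mat M *\<^sub>v x = transpose_mat M *\<^sub>v y"
      by (rule CCGC_D[OF CCGC _ y(2)])
    then have x: "x \<in> carrier_vec (dim_row M)" "nonneg_vec x"
      "transpose_mat M *\<^sub>v x = transpose_mat M *\<^sub>v y"
      by simp_all
    have "y \<bullet> (M *\<^sub>v z) = (transpose_mat M *\<^sub>v y) \<bullet> z"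
      using transpose_vec_mult_scalar[OF M z y(1)] by simp
    also have "\<dots> = x \<bullet> (M *\<^sub>v z)"
      using transpose_vec_mult_scalar[OF M z x(1)] x(3) by simp
    also have "\<dots> \<ge> 0"
      using x Mz unfolding scalar_prod_def nonneg_vec_def by (intro sum_nonneg) auto
    finally show False
      using y(3) by simp
  qed
qed

lemma RCGC_iff_CCGC:
  assumes "nonneg_mat M"
  shows "RCGC M \<longleftrightarrow> CCGC M"
  using assms nonneg_mat_transpose[OF assms]
    CCGC_transpose_imp_CCGC[of M] CCGC_transpose_imp_CCGC[of "transpose_mat M"]
  by (auto simp: RCGC_eq_CCGC_transpose)

theorem corollary2p4:
  fixes M :: "real mat" and p q :: nat
  assumes "M \<in> carrier_mat p q" and "nonneg_mat M"
  shows "(is_slack_matrix_of_polyhedral_cone M \<longleftrightarrow> RCGC M) \<and>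
         (RCGC M \<longleftrightarrow> CCGC M) \<and>
         (is_slack_matrix_of_polyhedral_cone M \<longleftrightarrow> CCGC M)"
  using slack_matrix_imp_RCGC RCGC_imp_slack_matrix[OF assms(1)] RCGC_iff_CCGC[OF assms(2)]
  by blast

end
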